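(* Let $n\ge 25$ and let $S_n$ be the star graph with vertices $a_1,\dots,a_n$ and center $a_1$. Then $$\lim_{p\to\infty}\|M_{S_n}\|_p^p=\frac{1+\sqrt{n}}{2}.$$
   Context: For a finite connected graph $G=(V,E)$ with graph distance $d_G$ and $f:V\to\mathbb{R}$, $M_Gf(v)=\sup_{r\geq 0}\frac{1}{|B(v,r)|}\sum_{u\in B(v,r)}|f(u)|$, where $B(v,r)=\{u\in V: d_G(u,v)\le r\}$. For $g:V\to\mathbb{R}$, $\|g\|_p=(\sum_{v\in V}|g(v)|^p)^{1/p}$ and $\|M_G\|_p=\sup_{f\neq 0}\|M_Gf\|_p/\|f\|_p$. The star graph $S_n$ has vertices $a_1,\dots,a_n$ and edges exactly between $a_1$ and each $a_i$, $i\ge 2$. *)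

theory Defs
  imports "HOL-Analysis.Analysis"
begin

definition edge_rel :: "'a set \<Rightarrow> ('a \<Rightarrow> 'a \<Rightarrow> bool) \<Rightarrow> ('a \<times> 'a) set" where
  "edge_rel V E = {(x, y). x \<in> V \<and> y \<in> V \<and> E x y}"

text \<open>Graph distance: length of a shortest walk (graph assumed connected).\<close>
definition graph_dist :: "'a set \<Rightarrow> ('a \<Rightarrow> 'a \<Rightarrow> bool) \<Rightarrow> 'a \<Rightarrow> 'a \<Rightarrow> nat" where
  "graph_dist V E u v = (LEAST k. (u, v) \<in> edge_rel V E ^^ k)"

definition gball :: "'a set \<Rightarrow> ('a \<Rightarrow> 'a \<Rightarrow> bool) \<Rightarrow> 'a \<Rightarrow> real \<Rightarrow> 'a set" where
  "gball V E v r = {u \<in> V. real (graph_dist V E u v) \<le> r}"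

definition maxop :: "'a set \<Rightarrow> ('a \<Rightarrow> 'a \<Rightarrow> bool) \<Rightarrow> ('a \<Rightarrow> real) \<Rightarrow> 'a \<Rightarrow> real" where
  "maxop V E f v = (SUP r\<in>{0..}. (\<Sum>u\<in>gball V E v r. \<bar>f u\<bar>) / real (card (gball V E v r)))"

definition pnorm :: "'a set \<Rightarrow> real \<Rightarrow> ('a \<Rightarrow> real) \<Rightarrow> real" where
  "pnorm V p g = (\<Sum>v\<in>V. \<bar>g v\<bar> powr p) powr (1 / p)"

definition maxop_norm :: "'a set \<Rightarrow> ('a \<Rightarrow> 'a \<Rightarrow> bool) \<Rightarrow> real \<Rightarrow> real" where
  "maxop_norm V E p = (SUP f\<in>{f. \<exists>v\<in>V. f v \<noteq> 0}. pnorm V p (maxop V E f) / pnorm V p f)"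

definition star_V :: "nat \<Rightarrow> nat set" where
  "star_V n = {1..n}"

definition star_E :: "nat \<Rightarrow> nat \<Rightarrow> bool" where
  "star_E x y = ((x = 1 \<and> y \<ge> 2) \<or> (y = 1 \<and> x \<ge> 2))"

end

(*
  On the star the maximal function is explicit: with a = |f a_1| and A the mean of |f|,
  M f (a_1) = max a A and M f (a_i) = max |f a_i| ((a + |f a_i|)/2) A for the leaves.

  Lower bound: f a_1 = 1 and f a_i = x with x^p = (1 + sqrt n)^-2 has ratio exactly
  (1 + sqrt n)/2 for every p, because (1 + x)/2 >= sqrt x.

  Upper bound: ((x + a)/2)^p <= (c a x)^(p/2) + (1 - delta/2)^p a^p with
  c = (2 - delta)^2 / (4 (1 - delta)), and Jensen gives A^p <= ||f||_p^p / n.  Bounding the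
  geometric mean by AM-GM with a weight chosen according to the size of A^p relative to a^p
  yields ||M f||_p^p <= ((1 + sqrt n)/2 c^p + n (1 - delta/2)^p) ||f||_p^p for n >= 16.
  For delta = p^(-2/3) both c^p -> 1 and (1 - delta/2)^p -> 0.
*)

theory Submission
  imports Defs "HOL-Real_Asymp.Real_Asymp"
begin

lemma graph_dist_eqI:
  assumes "(u, v) \<in> edge_rel V E ^^ k" and "\<And>j. j < k \<Longrightarrow> (u, v) \<notin> edge_rel V E ^^ j"
  shows "graph_dist V E u v = k"
  unfolding graph_dist_def using assms by (intro Least_equality) (auto simp: not_less[symmetric])

lemma maxop_nonneg:
  assumes "finite V"
  shows "maxop V E f v \<ge> 0"
proof -
  define avg where "avg = (\<lambda>B. (\<Sum>u\<in>B. \<bar>f u\<bar>) / real (card B))"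
  have "(\<lambda>r. avg (gball V E v r)) ` {0..} \<subseteq> avg ` Pow V"
    by (auto simp: gball_def)
  then have bdd: "bdd_above ((\<lambda>r. avg (gball V E v r)) ` {0..})"
    using assms by (meson bdd_above_mono finite_Pow_iff finite_imageI bdd_above_finite)
  have "0 \<le> avg (gball V E v 0)" by (simp add: avg_def sum_nonneg)
  also have "\<dots> \<le> (SUP r\<in>{0..}. avg (gball V E v r))"
    by (rule cSUP_upper) (use bdd in auto)
  finally show ?thesis by (simp add: maxop_def avg_def)
qed

lemma SUP_three_steps:
  fixes h :: "real \<Rightarrow> real"
  assumes "\<And>r. 0 \<le> r \<Longrightarrow> r < 1 \<Longrightarrow> h r = a"
    and "\<And>r. 1 \<le> r \<Longrightarrow> r < 2 \<Longrightarrow> h r = b"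
    and "\<And>r. 2 \<le> r \<Longrightarrow> h r = c"
  shows "(SUP r\<in>{0..}. h r) = max a (max b c)"
proof -
  have "h ` {0..} = {a, b, c}"
  proof (intro equalityI subsetI)
    fix y assume "y \<in> h ` {0..}"
    then obtain r where "r \<ge> 0" "y = h r" by auto
    then show "y \<in> {a, b, c}" using assms by (cases "r < 1"; cases "r < 2") auto
  next
    fix y assume "y \<in> {a, b, c}"
    then have "y = h 0 \<or> y = h 1 \<or> y = h 2" using assms by force
    then show "y \<in> h ` {0..}" by force
  qed
  then show ?thesis by (simp add: cSup_eq_Max max.assoc)
qed

lemma star_edge_rel_iff:
  "(x, y) \<in> edge_rel (star_V n) star_E \<longleftrightarrow>
     x \<in> star_V n \<and> y \<in> star_V n \<and> (x = 1 \<and> y \<ge> 2 \<or> y = 1 \<and> x \<ge> 2)"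
  by (simp add: edge_rel_def star_E_def)

lemma star_graph_dist:
  assumes "u \<in> star_V n" "v \<in> star_V n"
  shows "graph_dist (star_V n) star_E u v = (if u = v then 0 else if u = 1 \<or> v = 1 then 1 else 2)"
proof (rule graph_dist_eqI)
  have "1 \<in> star_V n" "u \<ge> 1" "v \<ge> 1" using assms by (auto simp: star_V_def)
  then show "(u, v) \<in> edge_rel (star_V n) star_E ^^
      (if u = v then 0 else if u = 1 \<or> v = 1 then 1 else 2)"
    using assms by (auto simp: star_edge_rel_iff numeral_2_eq_2 relcomp_unfold)
next
  fix j assume "j < (if u = v then 0 else if u = 1 \<or> v = 1 then 1 else 2::nat)"
  then have "j = 0 \<and> u \<noteq> v \<or> j = 1 \<and> u \<noteq> 1 \<and> v \<noteq> 1 \<and> u \<noteq> v" by (auto split: if_splits)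
  then show "(u, v) \<notin> edge_rel (star_V n) star_E ^^ j" by (auto simp: star_edge_rel_iff)
qed

lemma star_gball_center:
  assumes "n \<ge> 1" "r \<ge> 0"
  shows "gball (star_V n) star_E 1 r = (if r < 1 then {1} else star_V n)"
proof -
  have "1 \<in> star_V n" using assms by (simp add: star_V_def)
  then show ?thesis using assms by (auto simp: gball_def star_graph_dist split: if_splits)
qed

lemma star_gball_leaf:
  assumes "i \<in> {2..n}" "r \<ge> 0"
  shows "gball (star_V n) star_E i r = (if r < 1 then {i} else if r < 2 then {1, i} else star_V n)"
proof -
  have "1 \<in> star_V n" "i \<in> star_V n" "i \<noteq> 1" using assms by (auto simp: star_V_def)
  then show ?thesis using assms by (auto simp: gball_def star_graph_dist split: if_splits)
qed

lemma card_star_V [simp]: "card (star_V n) = n"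
  by (simp add: star_V_def)

lemma sum_star_V:
  assumes "n \<ge> 1"
  shows "(\<Sum>v\<in>star_V n. h v) = h 1 + (\<Sum>i\<in>{2..n}. h i)"
proof -
  have "star_V n = insert 1 {2..n}" using assms by (auto simp: star_V_def)
  then show ?thesis by simp
qed

lemma star_maxop_center:
  assumes "n \<ge> 1"
  shows "maxop (star_V n) star_E f 1 = max \<bar>f 1\<bar> ((\<Sum>u\<in>star_V n. \<bar>f u\<bar>) / n)"
proof -
  let ?A = "(\<Sum>u\<in>star_V n. \<bar>f u\<bar>) / n"
  have "maxop (star_V n) star_E f 1 = max \<bar>f 1\<bar> (max ?A ?A)"
    unfolding maxop_def
    \<comment> \<open>otherwise simp rewrites the vertex \<open>1\<close> to \<open>Suc 0\<close> and star_gball_center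
      no longer matches\<close>
    by (rule SUP_three_steps) (simp_all add: star_gball_center assms del: One_nat_def)
  then show ?thesis by simp
qed

lemma star_maxop_leaf:
  assumes "i \<in> {2..n}"
  shows "maxop (star_V n) star_E f i =
    max \<bar>f i\<bar> (max ((\<bar>f 1\<bar> + \<bar>f i\<bar>) / 2) ((\<Sum>u\<in>star_V n. \<bar>f u\<bar>) / n))"
  unfolding maxop_def using assms
  by (intro SUP_three_steps) (auto simp: star_gball_leaf add.commute)

lemma convex_on_powr_nonneg:
  fixes p :: real
  assumes "p \<ge> 1"
  shows "convex_on {0..} (\<lambda>x. x powr p)"
proof (rule convex_on_linorderI)
  fix t x y :: real
  assume t: "0 < t" "t < 1" and xy: "x \<in> {0..}" "y \<in> {0..}" "x < y"
  show "((1 - t) *\<^sub>R x + t *\<^sub>R y) powr p \<le> (1 - t) * x powr p + t * y powr p"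
  proof (cases "x = 0")
    case True
    have "(t * y) powr p = t powr p * y powr p" by (simp add: powr_mult)
    also have "\<dots> \<le> t * y powr p"
      using powr_le_one_le[of t p] t assms by (intro mult_right_mono) auto
    finally show ?thesis using True assms by simp
  next
    case False
    then show ?thesis using convex_onD[OF powr_convex[OF assms]] t xy by auto
  qed
qed (simp add: convex_real_interval)

lemma powr_mean_le_mean_powr:
  fixes p :: real and y :: "'a \<Rightarrow> real"
  assumes "p \<ge> 1" "finite V" "V \<noteq> {}" "\<And>v. v \<in> V \<Longrightarrow> y v \<ge> 0"
  shows "((\<Sum>v\<in>V. y v) / card V) powr p \<le> (\<Sum>v\<in>V. y v powr p) / card V"
proof -
  have "card V > 0" using assms by (simp add: card_gt_0_iff)
  then have "(\<Sum>v\<in>V. (1 / card V) *\<^sub>R y v) powr p \<le> (\<Sum>v\<in>V. 1 / card V * y v powr p)"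
    using assms by (intro convex_on_sum[OF _ _ convex_on_powr_nonneg]) auto
  then show ?thesis by (simp add: sum_distrib_left[symmetric] sum_divide_distrib[symmetric])
qed

lemma max_powr:
  fixes u v p :: real
  assumes "0 \<le> u" "0 \<le> v" "0 \<le> p"
  shows "max u v powr p = max (u powr p) (v powr p)"
  using assms by (cases "u \<le> v") (auto simp: max_def intro: powr_mono2 dest: powr_mono2[of p v u])

lemma powr_midpoint_le:
  fixes \<delta> p x a :: real
  assumes \<delta>: "0 < \<delta>" "\<delta> < 1" and "0 \<le> p" "0 \<le> x" "x \<le> a"
  shows "((x + a) / 2) powr p
    \<le> ((2 - \<delta>)^2 / (4 * (1 - \<delta>)) * a * x) powr (p / 2) + (1 - \<delta> / 2) powr p * a powr p"
proof (cases "x \<le> (1 - \<delta>) * a")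
  case True
  then have "((x + a) / 2) powr p \<le> ((1 - \<delta> / 2) * a) powr p"
    using assms by (intro powr_mono2) (auto simp: field_simps)
  then show ?thesis using assms by (simp add: add_increasing powr_mult)
next
  case False
  have "(1 - \<delta>) * x \<le> a" using assms by (smt (verit) mult_left_le_one_le)
  then have "(1 - \<delta>) * (x + a)^2 \<le> (1 - \<delta>) * (x + a)^2 + (x - (1 - \<delta>) * a) * (a - (1 - \<delta>) * x)"
    using False by simp
  also have "\<dots> = (2 - \<delta>)^2 * a * x" by (simp add: algebra_simps power2_eq_square)
  finally have "((x + a) / 2)^2 \<le> (2 - \<delta>)^2 / (4 * (1 - \<delta>)) * a * x"
    using \<delta> by (simp add: field_simps power2_eq_square)
  then have "(((x + a) / 2)^2) powr (p / 2) \<le> ((2 - \<delta>)^2 / (4 * (1 - \<delta>)) * a * x) powr (p / 2)"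
    using assms by (intro powr_mono2) auto
  moreover have "(((x + a) / 2)^2) powr (p / 2) = ((x + a) / 2) powr p"
    using assms by (simp add: powr_powr flip: powr_numeral)
  ultimately have "((x + a) / 2) powr p \<le> ((2 - \<delta>)^2 / (4 * (1 - \<delta>)) * a * x) powr (p / 2)"
    by simp
  then show ?thesis by (simp add: add_increasing2)
qed

lemma powr_max_midpoint_le:
  fixes \<delta> p a x A :: real
  assumes \<delta>: "0 < \<delta>" "\<delta> < 1" and nonneg: "0 \<le> p" "0 \<le> a" "0 \<le> x" "0 \<le> A"
  defines "c \<equiv> (2 - \<delta>)^2 / (4 * (1 - \<delta>))"
  shows "max x (max ((a + x) / 2) A) powr p
    \<le> max (x powr p) (max (sqrt ((c * a) powr p * x powr p)) (A powr p))
      + (1 - \<delta> / 2) powr p * a powr p"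
proof -
  define e where "e = (1 - \<delta> / 2) powr p * a powr p"
  have "0 \<le> e" by (simp add: e_def)
  have "((a + x) / 2) powr p \<le> max (x powr p) (sqrt ((c * a) powr p * x powr p)) + e"
  proof (cases "x \<le> a")
    case True
    have "c \<ge> 0" using \<delta> by (simp add: c_def)
    then have "sqrt ((c * a) powr p * x powr p) = (c * a * x) powr (p / 2)"
      using nonneg by (simp add: powr_half_sqrt_powr powr_mult real_sqrt_mult)
    moreover have "((a + x) / 2) powr p \<le> (c * a * x) powr (p / 2) + e"
      using powr_midpoint_le[OF \<delta> \<open>0 \<le> p\<close> \<open>0 \<le> x\<close> True]
      unfolding c_def e_def by (simp only: add.commute)
    ultimately show ?thesis
      using max.cobounded2[of "x powr p" "sqrt ((c * a) powr p * x powr p)"] by linarith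
  next
    case False
    then have "((a + x) / 2) powr p \<le> x powr p" using nonneg by (intro powr_mono2) auto
    then show ?thesis using \<open>0 \<le> e\<close> max.cobounded1[of "x powr p"] by linarith
  qed
  moreover have "max x (max ((a + x) / 2) A) powr p
      = max (x powr p) (max (((a + x) / 2) powr p) (A powr p))"
    using nonneg by (simp add: max_powr)
  ultimately show ?thesis using \<open>0 \<le> e\<close> unfolding e_def[symmetric] by linarith
qed

lemma sqrt_mult_le_weighted:
  fixes \<theta> \<alpha> \<beta> :: real
  assumes "\<theta> > 0" "\<alpha> \<ge> 0" "\<beta> \<ge> 0"
  shows "sqrt (\<alpha> * \<beta>) \<le> \<theta> * \<beta> + \<alpha> / (4 * \<theta>)"
proof -
  have "sqrt (\<alpha> * \<beta>) = sqrt ((2 * \<theta> * \<beta>) * (\<alpha> / (2 * \<theta>)))"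
    using assms by (simp add: field_simps)
  also have "\<dots> \<le> (2 * \<theta> * \<beta> + \<alpha> / (2 * \<theta>)) / 2"
    using assms by (intro arith_geo_mean_sqrt) auto
  finally show ?thesis by (simp add: field_simps)
qed

lemma intermediate_regime_bound:
  fixes r \<alpha> g B :: real
  assumes r: "r \<ge> 4" and g: "g > 0" and \<alpha>: "\<alpha> \<le> 2 * (1 + r) * g" and mean: "r^2 * g \<le> \<alpha> + B"
  shows "\<alpha> + \<alpha> / (4 * g) * B + (r^2 - 1) * g \<le> (1 + r) / 2 * (\<alpha> + B)"
proof -
  have "2 * (1 + r) \<le> r^2 - 2 * r + 2"
    using mult_right_mono[OF r, of r] r by (simp add: power2_eq_square)
  then have "2 * (1 + r) * g \<le> (r^2 - 2 * r + 2) * g" using g by simp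
  then have "0 \<le> (2 * (1 + r) * g - \<alpha>) * ((r^2 - 2 * r + 2) * g - \<alpha>)"
    using \<alpha> by simp
  also have "\<dots> = (2 * (1 + r) * g - \<alpha>) * (r^2 * g) - 4 * g * \<alpha> + \<alpha>^2 - 4 * (r^2 - 1) * g^2"
    by (simp add: algebra_simps power2_eq_square)
  also have "\<dots> \<le> (2 * (1 + r) * g - \<alpha>) * (\<alpha> + B) - 4 * g * \<alpha> + \<alpha>^2 - 4 * (r^2 - 1) * g^2"
    using \<alpha> mean by (simp add: mult_left_mono)
  also have "\<dots> = 4 * g * ((1 + r) / 2 * (\<alpha> + B) - (\<alpha> + \<alpha> / (4 * g) * B + (r^2 - 1) * g))"
    using g by (simp add: field_simps power2_eq_square)
  finally show ?thesis using g by (simp add: zero_le_mult_iff)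
qed

lemma sum_max_sqrt_le_weighted:
  fixes I :: "'a set" and \<theta> \<alpha> g :: real and \<beta> :: "'a \<Rightarrow> real"
  assumes \<theta>: "\<theta> \<ge> 1" and \<alpha>: "\<alpha> \<ge> 0" and g: "g \<ge> 0" and \<beta>: "\<And>i. i \<in> I \<Longrightarrow> \<beta> i \<ge> 0"
  shows "(\<Sum>i\<in>I. max (\<beta> i) (max (sqrt (\<alpha> * \<beta> i)) g))
    \<le> \<theta> * (\<Sum>i\<in>I. \<beta> i) + card I * max g (\<alpha> / (4 * \<theta>))"
proof -
  have "(\<Sum>i\<in>I. max (\<beta> i) (max (sqrt (\<alpha> * \<beta> i)) g)) \<le> (\<Sum>i\<in>I. \<theta> * \<beta> i + max g (\<alpha> / (4 * \<theta>)))"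
  proof (rule sum_mono)
    fix i assume "i \<in> I"
    then have "\<beta> i \<le> \<theta> * \<beta> i" "sqrt (\<alpha> * \<beta> i) \<le> \<theta> * \<beta> i + \<alpha> / (4 * \<theta>)" "0 \<le> \<theta> * \<beta> i"
      using \<theta> \<alpha> \<beta>[of i] sqrt_mult_le_weighted[of \<theta> \<alpha> "\<beta> i"] by (auto simp: mult_le_cancel_right1)
    then show "max (\<beta> i) (max (sqrt (\<alpha> * \<beta> i)) g) \<le> \<theta> * \<beta> i + max g (\<alpha> / (4 * \<theta>))"
      using \<theta> \<alpha> g by (auto simp: max_def)
  qed
  then show ?thesis by (simp add: sum.distrib sum_distrib_left)
qed

text \<open>Here \<open>\<alpha>\<close>, \<open>\<beta> i\<close> and \<open>g\<close> stand for the \<open>p\<close>-th powers of the rescaled centre value, the leaf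
  values and the mean; \<open>sqrt (\<alpha> * \<beta> i)\<close> dominates the midpoint term at leaf \<open>i\<close>.\<close>

lemma sum_max_sqrt_le:
  fixes I :: "'a set" and r \<alpha> g :: real and \<beta> :: "'a \<Rightarrow> real"
  assumes r: "r \<ge> 4" and card: "real (card I) = r^2 - 1"
    and \<alpha>: "\<alpha> \<ge> 0" and g: "g \<ge> 0" and \<beta>: "\<And>i. i \<in> I \<Longrightarrow> \<beta> i \<ge> 0"
    and mean: "r^2 * g \<le> \<alpha> + (\<Sum>i\<in>I. \<beta> i)"
  shows "max \<alpha> g + (\<Sum>i\<in>I. max (\<beta> i) (max (sqrt (\<alpha> * \<beta> i)) g)) \<le> (1 + r) / 2 * (\<alpha> + (\<Sum>i\<in>I. \<beta> i))"
proof -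
  define B where "B = (\<Sum>i\<in>I. \<beta> i)"
  define L where "L = (\<Sum>i\<in>I. max (\<beta> i) (max (sqrt (\<alpha> * \<beta> i)) g))"
  have B: "B \<ge> 0" using \<beta> by (simp add: B_def sum_nonneg)
  have leaves: "L \<le> \<theta> * B + (r^2 - 1) * max g (\<alpha> / (4 * \<theta>))" if "\<theta> \<ge> 1" for \<theta>
    using sum_max_sqrt_le_weighted[of \<theta> \<alpha> g I \<beta>] that \<alpha> g \<beta> by (simp add: L_def B_def card)
  have r2: "2 \<le> (1 + r) / 2" using r by simp
  consider (small) "\<alpha> \<le> 4 * g" | (large) "2 * (1 + r) * g < \<alpha>"
    | (mid) "4 * g < \<alpha>" "\<alpha> \<le> 2 * (1 + r) * g"
    by linarith
  then have "max \<alpha> g + L \<le> (1 + r) / 2 * (\<alpha> + B)"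
  proof cases
    case small
    then have "max \<alpha> g + L \<le> \<alpha> + B + r^2 * g"
      using leaves[of 1] \<alpha> g by (simp add: algebra_simps)
    also have "\<dots> \<le> 2 * (\<alpha> + B)" using mean by (simp add: B_def)
    also have "\<dots> \<le> (1 + r) / 2 * (\<alpha> + B)" using r2 \<alpha> B by (intro mult_right_mono) auto
    finally show ?thesis .
  next
    case large
    have "L \<le> (1 + r) / 2 * B + (r^2 - 1) * max g (\<alpha> / (4 * ((1 + r) / 2)))"
      using r2 by (intro leaves) simp
    also have "max g (\<alpha> / (4 * ((1 + r) / 2))) = \<alpha> / (2 * (1 + r))"
      using large r by (simp add: field_simps)
    also have "(r^2 - 1) * (\<alpha> / (2 * (1 + r))) = (r - 1) * \<alpha> / 2"
      using r by (simp add: field_simps power2_eq_square)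
    finally have "L \<le> (1 + r) / 2 * B + (r - 1) * \<alpha> / 2" .
    moreover have "max \<alpha> g = \<alpha>"
      using large mult_right_mono[of 1 "2 * (1 + r)" g] g r by simp
    moreover have "\<alpha> + ((1 + r) / 2 * B + (r - 1) * \<alpha> / 2) = (1 + r) / 2 * (\<alpha> + B)"
      by (simp add: field_simps)
    ultimately show ?thesis by linarith
  next
    case mid
    then have "g > 0" using g by (cases "g = 0") auto
    then have "max g (\<alpha> / (4 * (\<alpha> / (4 * g)))) = g" "max \<alpha> g = \<alpha>" "1 \<le> \<alpha> / (4 * g)"
      using mid by auto
    then have "max \<alpha> g + L \<le> \<alpha> + \<alpha> / (4 * g) * B + (r^2 - 1) * g"
      using leaves[of "\<alpha> / (4 * g)"] by simp
    also have "\<dots> \<le> (1 + r) / 2 * (\<alpha> + B)"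
      using mean unfolding B_def by (rule intermediate_regime_bound[OF r \<open>g > 0\<close> mid(2)])
    finally show ?thesis .
  qed
  then show ?thesis by (simp add: B_def L_def)
qed

lemma star_sum_maxop_powr_le:
  fixes n :: nat and p \<delta> :: real and f :: "nat \<Rightarrow> real"
  assumes n: "n \<ge> 16" and p: "p \<ge> 1" and \<delta>: "0 < \<delta>" "\<delta> < 1"
  defines "c \<equiv> (2 - \<delta>)^2 / (4 * (1 - \<delta>))"
  shows "(\<Sum>v\<in>star_V n. maxop (star_V n) star_E f v powr p)
    \<le> ((1 + sqrt n) / 2 * c powr p + n * (1 - \<delta> / 2) powr p) * (\<Sum>v\<in>star_V n. \<bar>f v\<bar> powr p)"
proof -
  define r where "r = sqrt n"
  define A where "A = (\<Sum>u\<in>star_V n. \<bar>f u\<bar>) / n"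
  define \<alpha> where "\<alpha> = (c * \<bar>f 1\<bar>) powr p"
  define \<beta> where "\<beta> i = \<bar>f i\<bar> powr p" for i
  define \<epsilon> where "\<epsilon> = (1 - \<delta> / 2) powr p"
  define S where "S = (\<Sum>v\<in>star_V n. \<bar>f v\<bar> powr p)"
  have n1: "n \<ge> 1" using n by simp
  have r: "r \<ge> 4" "r^2 = n" using n by (auto simp: r_def real_le_rsqrt)
  have c: "c \<ge> 1" using \<delta> by (simp add: c_def power2_eq_square field_simps)
  have S: "S = \<bar>f 1\<bar> powr p + (\<Sum>i\<in>{2..n}. \<beta> i)" using n by (simp add: S_def \<beta>_def sum_star_V)
  have "\<bar>f 1\<bar> powr p \<le> \<alpha>" using c p by (simp add: \<alpha>_def powr_mono2 mult_le_cancel_right1)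
  moreover have \<alpha>: "\<alpha> = c powr p * \<bar>f 1\<bar> powr p" using c by (simp add: \<alpha>_def powr_mult)
  moreover have "n * A powr p \<le> S"
    using powr_mean_le_mean_powr[OF p, of "star_V n" "\<lambda>v. \<bar>f v\<bar>"] n
    by (simp add: A_def S_def star_V_def field_simps)
  ultimately have mean: "r^2 * A powr p \<le> \<alpha> + (\<Sum>i\<in>{2..n}. \<beta> i)"
    using r S by simp
  have "(\<Sum>i\<in>{2..n}. \<beta> i) \<le> c powr p * (\<Sum>i\<in>{2..n}. \<beta> i)"
    using mult_right_mono[OF ge_one_powr_ge_zero[OF c, of p]] p by (simp add: \<beta>_def sum_nonneg)
  then have total: "\<alpha> + (\<Sum>i\<in>{2..n}. \<beta> i) \<le> c powr p * S"
    using \<alpha> S by (simp add: distrib_left)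
  have A: "A \<ge> 0" by (simp add: A_def sum_nonneg)
  have "maxop (star_V n) star_E f 1 powr p = max (\<bar>f 1\<bar> powr p) (A powr p)"
    using star_maxop_center[of n f] n A p by (simp add: A_def max_powr)
  then have center: "maxop (star_V n) star_E f 1 powr p \<le> max \<alpha> (A powr p)"
    using \<open>\<bar>f 1\<bar> powr p \<le> \<alpha>\<close> by simp
  have leaf: "maxop (star_V n) star_E f i powr p
      \<le> max (\<beta> i) (max (sqrt (\<alpha> * \<beta> i)) (A powr p)) + \<epsilon> * \<bar>f 1\<bar> powr p"
    if "i \<in> {2..n}" for i
    unfolding star_maxop_leaf[OF that] A_def[symmetric] \<alpha>_def \<beta>_def \<epsilon>_def c_def
    by (rule powr_max_midpoint_le) (use \<delta> p A in auto)
  have "(\<Sum>v\<in>star_V n. maxop (star_V n) star_E f v powr p)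
      \<le> max \<alpha> (A powr p)
        + (\<Sum>i\<in>{2..n}. max (\<beta> i) (max (sqrt (\<alpha> * \<beta> i)) (A powr p)) + \<epsilon> * \<bar>f 1\<bar> powr p)"
    unfolding sum_star_V[OF n1] by (intro add_mono center sum_mono leaf)
  also have "\<dots> = max \<alpha> (A powr p) + (\<Sum>i\<in>{2..n}. max (\<beta> i) (max (sqrt (\<alpha> * \<beta> i)) (A powr p)))
      + (n - 1) * (\<epsilon> * \<bar>f 1\<bar> powr p)"
    using n by (simp add: sum.distrib of_nat_diff)
  also have "\<dots> \<le> (1 + r) / 2 * (\<alpha> + (\<Sum>i\<in>{2..n}. \<beta> i)) + n * (\<epsilon> * S)"
  proof (rule add_mono)
    show "max \<alpha> (A powr p) + (\<Sum>i\<in>{2..n}. max (\<beta> i) (max (sqrt (\<alpha> * \<beta> i)) (A powr p)))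
        \<le> (1 + r) / 2 * (\<alpha> + (\<Sum>i\<in>{2..n}. \<beta> i))"
      using r mean n by (intro sum_max_sqrt_le) (auto simp: \<alpha>_def \<beta>_def of_nat_diff)
    show "(n - 1) * (\<epsilon> * \<bar>f 1\<bar> powr p) \<le> n * (\<epsilon> * S)"
      using S by (intro mult_mono) (auto simp: \<epsilon>_def \<beta>_def sum_nonneg)
  qed
  also have "\<dots> \<le> ((1 + r) / 2 * c powr p + n * \<epsilon>) * S"
    using mult_left_mono[OF total, of "(1 + r) / 2"] r by (simp add: algebra_simps)
  finally show ?thesis by (simp add: r_def \<epsilon>_def S_def)
qed

lemma star_sum_maxop_powr_ge:
  fixes n :: nat and p :: real
  assumes n: "n \<ge> 2" and p: "p > 0"
  shows "\<exists>f. (\<exists>v\<in>star_V n. f v \<noteq> 0) \<and>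
    (1 + sqrt n) / 2 * (\<Sum>v\<in>star_V n. \<bar>f v\<bar> powr p)
      \<le> (\<Sum>v\<in>star_V n. maxop (star_V n) star_E f v powr p)"
proof -
  \<comment> \<open>\<open>s = 1/(1 + sqrt n)\<close> maximises the ratio \<open>(1 + (n - 1) s) / (1 + (n - 1) s\<^sup>2)\<close>
    obtained below\<close>
  define r where "r = sqrt n"
  define s where "s = 1 / (1 + r)"
  define x where "x = s powr (2 / p)"
  define f where "f v = (if v = 1 then 1 else x)" for v :: nat
  have n1: "n \<ge> 1" using n by simp
  have r: "r \<ge> 0" "r^2 = n" by (auto simp: r_def)
  have s: "s > 0" using r by (simp add: s_def)
  have x: "x > 0" "x powr p = s^2" "sqrt x powr p = s"
    using s p
    by (auto simp: x_def powr_powr sqrt_def root_powr_inverse powr_numeral[symmetric]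
        simp del: powr_numeral)
  have center: "1 \<le> maxop (star_V n) star_E f 1 powr p"
    using star_maxop_center[OF n1, of f] p by (simp add: f_def ge_one_powr_ge_zero)
  have leaf: "s \<le> maxop (star_V n) star_E f i powr p" if "i \<in> {2..n}" for i
  proof -
    have "sqrt x \<le> (1 + x) / 2"
      using arith_geo_mean_sqrt[of 1 x] x by simp
    also have "\<dots> \<le> maxop (star_V n) star_E f i"
      using star_maxop_leaf[OF that, of f] that x by (simp add: f_def le_max_iff_disj)
    finally show ?thesis using x p by (metis powr_mono2 less_imp_le real_sqrt_ge_zero)
  qed
  have "(real n - 1) * s \<le> (\<Sum>i\<in>{2..n}. maxop (star_V n) star_E f i powr p)"
    using sum_mono[of "{2..n}" "\<lambda>_. s"] leaf n1 by (simp add: of_nat_diff)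
  then have "1 + (real n - 1) * s \<le> (\<Sum>v\<in>star_V n. maxop (star_V n) star_E f v powr p)"
    using center by (simp add: sum_star_V[OF n1])
  moreover have "(\<Sum>v\<in>star_V n. \<bar>f v\<bar> powr p) = 1 + (real n - 1) * s^2"
    using n1 x by (simp add: sum_star_V f_def of_nat_diff)
  moreover have "(1 + r) / 2 * (1 + (real n - 1) * s^2) = 1 + (real n - 1) * s"
  proof -
    have "1 + r \<noteq> 0" using r by simp
    then have ns: "(real n - 1) * s = r - 1"
      by (simp add: s_def field_simps power2_eq_square flip: r(2))
    have "(real n - 1) * s^2 = ((real n - 1) * s) * s"
      by (simp only: power2_eq_square mult.assoc)
    then have "(1 + r) / 2 * (1 + (real n - 1) * s^2) = (1 + r) / 2 * (1 + (r - 1) * s)"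
      by (simp only: ns)
    also have "\<dots> = r"
      using \<open>1 + r \<noteq> 0\<close> by (simp add: s_def field_simps)
    finally show ?thesis by (simp add: ns)
  qed
  moreover have "1 \<in> star_V n" "f 1 \<noteq> 0" using n1 by (auto simp: star_V_def f_def)
  ultimately show ?thesis by (intro exI[of _ f]) (auto simp: r_def)
qed

lemma maxop_norm_powr_between:
  fixes V :: "'a set" and p L U :: real
  assumes V: "finite V" and p: "p > 0" and L: "0 \<le> L"
    and upper: "\<And>f. (\<Sum>v\<in>V. maxop V E f v powr p) \<le> U * (\<Sum>v\<in>V. \<bar>f v\<bar> powr p)"
    and lower: "\<exists>f. (\<exists>v\<in>V. f v \<noteq> 0) \<and> L * (\<Sum>v\<in>V. \<bar>f v\<bar> powr p) \<le> (\<Sum>v\<in>V. maxop V E f v powr p)"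
  shows "L \<le> maxop_norm V E p powr p \<and> maxop_norm V E p powr p \<le> U"
proof -
  let ?F = "{f. \<exists>v\<in>V. f v \<noteq> 0}"
  let ?R = "\<lambda>f. pnorm V p (maxop V E f) / pnorm V p f"
  have pos: "0 < (\<Sum>v\<in>V. \<bar>f v\<bar> powr p)" if "f \<in> ?F" for f
    using that V by (auto intro!: sum_pos2)
  have ratio: "?R f = ((\<Sum>v\<in>V. maxop V E f v powr p) / (\<Sum>v\<in>V. \<bar>f v\<bar> powr p)) powr (1 / p)" for f
    using maxop_nonneg[OF V] by (simp add: pnorm_def powr_divide sum_nonneg)
  obtain f0 where f0: "f0 \<in> ?F"
    and f0_lower: "L * (\<Sum>v\<in>V. \<bar>f0 v\<bar> powr p) \<le> (\<Sum>v\<in>V. maxop V E f0 v powr p)"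
    using lower by auto
  have "0 \<le> (\<Sum>v\<in>V. maxop V E f0 v powr p)" by (simp add: sum_nonneg)
  then have "0 \<le> U * (\<Sum>v\<in>V. \<bar>f0 v\<bar> powr p)" using upper[of f0] by linarith
  then have U: "0 \<le> U" using pos[OF f0] by (simp add: zero_le_mult_iff)
  have R_upper: "?R f \<le> U powr (1 / p)" if "f \<in> ?F" for f
  proof -
    have "(\<Sum>v\<in>V. maxop V E f v powr p) / (\<Sum>v\<in>V. \<bar>f v\<bar> powr p) \<le> U"
      using upper[of f] pos[OF that] by (simp add: divide_le_eq)
    then show ?thesis unfolding ratio using p by (intro powr_mono2) (auto simp: sum_nonneg)
  qed
  have R_lower: "L powr (1 / p) \<le> ?R f0"
  proof -
    have "L \<le> (\<Sum>v\<in>V. maxop V E f0 v powr p) / (\<Sum>v\<in>V. \<bar>f0 v\<bar> powr p)"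
      using f0_lower pos[OF f0] by (simp add: le_divide_eq)
    then show ?thesis unfolding ratio using p L by (intro powr_mono2) auto
  qed
  have "bdd_above (?R ` ?F)" using R_upper by (intro bdd_aboveI2)
  then have "?R f0 \<le> maxop_norm V E p"
    unfolding maxop_norm_def by (rule cSUP_upper[OF f0])
  then have "L powr (1 / p) \<le> maxop_norm V E p" using R_lower by linarith
  moreover have "maxop_norm V E p \<le> U powr (1 / p)"
    unfolding maxop_norm_def using f0 R_upper by (intro cSUP_least) auto
  ultimately have "(L powr (1 / p)) powr p \<le> maxop_norm V E p powr p"
    and "maxop_norm V E p powr p \<le> (U powr (1 / p)) powr p"
    using p by (auto intro: powr_mono2 order_trans[OF powr_ge_zero])
  then show ?thesis using p L U by (simp add: powr_powr)
qed

theorem theorem3p6: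
  fixes n :: nat
  assumes "n \<ge> 25"
  shows "((\<lambda>p. maxop_norm (star_V n) star_E p powr p) \<longlongrightarrow> (1 + sqrt (real n)) / 2) at_top"
proof -
  \<comment> \<open>the two powers in \<open>U p\<close> behave like \<open>exp (p \<delta>\<^sup>2 / 4)\<close> and \<open>exp (- p \<delta> / 2)\<close>\<close>
  define \<delta> where "\<delta> p = p powr (-2/3)" for p :: real
  define U where
    "U p = (1 + sqrt n) / 2 * ((2 - \<delta> p)^2 / (4 * (1 - \<delta> p))) powr p + n * (1 - \<delta> p / 2) powr p"
    for p
  have "((\<lambda>p. ((2 - \<delta> p)^2 / (4 * (1 - \<delta> p))) powr p) \<longlongrightarrow> 1) at_top"
    and "((\<lambda>p. (1 - \<delta> p / 2) powr p) \<longlongrightarrow> 0) at_top"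
    unfolding \<delta>_def by real_asymp+
  then have "(U \<longlongrightarrow> (1 + sqrt n) / 2 * 1 + real n * 0) at_top"
    unfolding U_def by (intro tendsto_intros)
  then have U: "(U \<longlongrightarrow> (1 + sqrt n) / 2) at_top" by simp
  have "eventually (\<lambda>p. \<delta> p < 1) at_top"
    unfolding \<delta>_def by real_asymp
  with eventually_ge_at_top[of 1]
  have "eventually (\<lambda>p. (1 + sqrt n) / 2 \<le> maxop_norm (star_V n) star_E p powr p
      \<and> maxop_norm (star_V n) star_E p powr p \<le> U p) at_top"
  proof eventually_elim
    case (elim p)
    then have "0 < \<delta> p" "0 < p" by (simp_all add: \<delta>_def)
    show ?case
    proof (rule maxop_norm_powr_between)
      show "(\<Sum>v\<in>star_V n. maxop (star_V n) star_E f v powr p)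
          \<le> U p * (\<Sum>v\<in>star_V n. \<bar>f v\<bar> powr p)" for f
        unfolding U_def by (rule star_sum_maxop_powr_le) (use assms elim \<open>0 < \<delta> p\<close> in auto)
    qed (use star_sum_maxop_powr_ge[of n p] assms \<open>0 < p\<close> in \<open>simp_all add: star_V_def\<close>)
  qed
  then show ?thesis
    by (intro tendsto_sandwich[OF _ _ tendsto_const U]) (auto elim: eventually_mono)
qed

end
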